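(* Let $I$ be an interpretation and let $\delta,\delta'$ be objects of $D_A\sqcup SD_A$ (a type or a finite list of types). If there is a morphism $f:\delta\to\delta'$ (in $D_A$ or in $SD_A$), then $\llbracket\delta\rrbracket_I\subseteq\llbracket\delta'\rrbracket_I$.
   Context: $[n]=\{1,\dots,n\}$. Fix a class $\mathcal C$ of functions between finite ordinals equal to one of: all bijections, all injections, all surjections, all functions. For a small category $X$, $SX$ has finite lists of objects of $X$ as objects and morphisms $\langle x_1,\dots,x_n\rangle\to\langle y_1,\dots,y_m\rangle$ the tuples $\langle\alpha,f_1,\dots,f_m\rangle$ with $\alpha:[m]\to[n]$ in $\mathcal C$ and $f_i:x_{\alpha(i)}\to y_i$; composite of $\langle\alpha,\vec f\rangle$ then $\langle\beta,\vec g\rangle$ is $\langle\alpha\circ\beta,(g_i\circ f_{\beta(i)})_i\rangle$. Fix a small category $A$. $D_A$ is the colimit of $D_0=A$, $D_{k+1}=(SD_k)^{o}\times D_k\sqcup A$ along canonical inclusions: objects (types) $a::=o\mid\langle a_1,\dots,a_k\rangle\Rightarrow a$ ($o\in\mathrm{Ob}(A)$); morphisms are those of $A$ and $\langle\alpha,\vec f\rangle\Rightarrow f:(\vec a\Rightarrow a)\to(\vec a'\Rightarrow a')$ for $\langle\alpha,\vec f\rangle:\vec a'\to\vec a$ in $SD_A$ and $f:a\to a'$; no others. $SD_A=S(D_A)$. $\Lambda$ is the set of $\lambda$-terms. $\mathcal X\subseteq\Lambda$ is saturated if $M[N/x]N_1\cdots N_n\in\mathcal X$ implies $(\lambda x.M)N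 N_1\cdots N_n\in\mathcal X$. For $\mathcal X_1,\mathcal X_2\subseteq\Lambda$, $\mathcal X_1\Rightarrow\mathcal X_2=\{M\mid\forall N\in\mathcal X_1,\ MN\in\mathcal X_2\}$. An interpretation is a functor $I$ from $A$ to the poset of saturated subsets of $\Lambda$ ordered by inclusion. Realizers: $\llbracket o\rrbracket_I=I(o)$, $\llbracket\langle\rangle\rangle\rrbracket_I$ is replaced by $\llbracket\langle\rangle\rrbracket_I=\Lambda$, $\llbracket\langle a_1,\dots,a_k\rangle\rrbracket_I=\bigcap_{i=1}^k\llbracket a_i\rrbracket_I$ for $k\ge1$, $\llbracket\vec a\Rightarrow a\rrbracket_I=\llbracket\vec a\rrbracket_I\Rightarrow\llbracket a\rrbracket_I$. *)

theory Defs
  imports Main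
begin

record ('o, 'm) cat =
  hom  :: "'o \<Rightarrow> 'o \<Rightarrow> 'm set"
  idm  :: "'o \<Rightarrow> 'm"
  comp :: "'m \<Rightarrow> 'm \<Rightarrow> 'm"   (* comp g f = g o f *)

definition category :: "('o, 'm) cat \<Rightarrow> bool" where
  "category A \<longleftrightarrow>
     (\<forall>a. idm A a \<in> hom A a a) \<and>
     (\<forall>a b c f g. f \<in> hom A a b \<longrightarrow> g \<in> hom A b c \<longrightarrow> comp A g f \<in> hom A a c) \<and>
     (\<forall>a b f. f \<in> hom A a b \<longrightarrow> comp A f (idm A a) = f \<and> comp A (idm A b) f = f) \<and>
     (\<forall>a b c d f g h. f \<in> hom A a b \<longrightarrow> g \<in> hom A b c \<longrightarrow> h \<in> hom A c d \<longrightarrow>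
        comp A h (comp A g f) = comp A (comp A h g) f) \<and>
     (\<forall>a b a' b' f. f \<in> hom A a b \<longrightarrow> f \<in> hom A a' b' \<longrightarrow> a = a' \<and> b = b')"

datatype fclass = Bijections | Injections | Surjections | AllFunctions

text \<open>A function alpha : [m] -> [n] is represented by the list [alpha(1),...,alpha(m)]
  with entries in {1..n}.\<close>

definition is_fun :: "nat list \<Rightarrow> nat \<Rightarrow> nat \<Rightarrow> bool" where
  "is_fun al m n \<longleftrightarrow> length al = m \<and> set al \<subseteq> {1..n}"

fun in_class :: "fclass \<Rightarrow> nat list \<Rightarrow> nat \<Rightarrow> nat \<Rightarrow> bool" where
  "in_class Bijections al m n = (is_fun al m n \<and> distinct al \<and> set al = {1..n})"
| "in_class Injections al m n = (is_fun al m n \<and> distinct al)"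
| "in_class Surjections al m n = (is_fun al m n \<and> set al = {1..n})"
| "in_class AllFunctions al m n = is_fun al m n"

datatype 'o ty = Atom 'o | Fun "'o ty list" "'o ty"

datatype 'm dmor = Base 'm | Arr "nat list" "'m dmor list" "'m dmor"

text \<open>is_dmor A C f a b: f is a morphism a -> b in D_A.
  is_smor A C (al, fs) xs ys: <al, fs> is a morphism xs -> ys in SD_A, where
  al : [length ys] -> [length xs] in C and fs!(i-1) : xs_(al(i)) -> ys_i.\<close>

inductive is_dmor :: "('o, 'm) cat \<Rightarrow> fclass \<Rightarrow> 'm dmor \<Rightarrow> 'o ty \<Rightarrow> 'o ty \<Rightarrow> bool"
  and is_smor :: "('o, 'm) cat \<Rightarrow> fclass \<Rightarrow> nat list \<times> 'm dmor list \<Rightarrow> 'o ty list \<Rightarrow> 'o ty list \<Rightarrow> bool"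
  for A :: "('o, 'm) cat" and C :: fclass where
  base: "f \<in> hom A o1 o2 \<Longrightarrow> is_dmor A C (Base f) (Atom o1) (Atom o2)"
| arr: "is_smor A C (al, fs) as' as \<Longrightarrow> is_dmor A C f a a' \<Longrightarrow>
        is_dmor A C (Arr al fs f) (Fun as a) (Fun as' a')"
| seq: "in_class C al (length ys) (length xs) \<Longrightarrow> length fs = length ys \<Longrightarrow>
        (\<forall>i < length ys. is_dmor A C (fs ! i) (xs ! (al ! i - 1)) (ys ! i)) \<Longrightarrow>
        is_smor A C (al, fs) xs ys"

datatype lterm = Var nat | App lterm lterm | Lam lterm

primrec lift :: "lterm \<Rightarrow> nat \<Rightarrow> lterm" where
  "lift (Var i) k = (if i < k then Var i else Var (i + 1))"
| "lift (App s t) k = App (lift s k) (lift t k)"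
| "lift (Lam s) k = Lam (lift s (k + 1))"

primrec subst :: "lterm \<Rightarrow> lterm \<Rightarrow> nat \<Rightarrow> lterm" where
  "subst (Var i) s k = (if k < i then Var (i - 1) else if i = k then s else Var i)"
| "subst (App t u) s k = App (subst t s k) (subst u s k)"
| "subst (Lam t) s k = Lam (subst t (lift s 0) (k + 1))"

definition apps :: "lterm \<Rightarrow> lterm list \<Rightarrow> lterm" where
  "apps M Ns = foldl App M Ns"

definition saturated :: "lterm set \<Rightarrow> bool" where
  "saturated X \<longleftrightarrow> (\<forall>M N Ns. apps (subst M N 0) Ns \<in> X \<longrightarrow> apps (App (Lam M) N) Ns \<in> X)"

definition arrow :: "lterm set \<Rightarrow> lterm set \<Rightarrow> lterm set" where
  "arrow X1 X2 = {M. \<forall>N \<in> X1. App M N \<in> X2}"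

definition is_interpretation :: "('o, 'm) cat \<Rightarrow> ('o \<Rightarrow> lterm set) \<Rightarrow> bool" where
  "is_interpretation A I \<longleftrightarrow> (\<forall>o1. saturated (I o1)) \<and>
     (\<forall>o1 o2 f. f \<in> hom A o1 o2 \<longrightarrow> I o1 \<subseteq> I o2)"

primrec rlz :: "('o \<Rightarrow> lterm set) \<Rightarrow> 'o ty \<Rightarrow> lterm set"
  and rlz_list :: "('o \<Rightarrow> lterm set) \<Rightarrow> 'o ty list \<Rightarrow> lterm set" where
  "rlz I (Atom o1) = I o1"
| "rlz I (Fun as a) = arrow (rlz_list I as) (rlz I a)"
| "rlz_list I [] = UNIV"
| "rlz_list I (a # as) = rlz I a \<inter> rlz_list I as"

end

theory Submission
  imports Defs
begin

text \<open>At an arrow type the morphism of argument lists runs in the opposite direction, which is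
  exactly what the contravariance of \<open>arrow\<close> in its first argument needs. At a list, every
  entry of the target receives a morphism from some entry of the source, and the source
  realizers are an intersection containing that entry's realizers.\<close>

lemma rlz_list_conv_INT: "rlz_list I xs = (\<Inter>x\<in>set xs. rlz I x)"
  by (induction xs) auto

lemma arrow_mono: "X' \<subseteq> X \<Longrightarrow> Y \<subseteq> Y' \<Longrightarrow> arrow X Y \<subseteq> arrow X' Y'"
  by (auto simp: arrow_def)

lemma in_class_is_fun: "in_class C al m n \<Longrightarrow> is_fun al m n"
  by (cases C) auto

lemma is_fun_nth_index:
  assumes "is_fun al m n" and "i < m"
  shows "al ! i - 1 < n"
proof -
  have "al ! i \<in> set al" using assms by (simp add: is_fun_def)
  then show ?thesis using assms(1) by (force simp: is_fun_def)
qed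

lemma
  assumes "is_interpretation A I"
  shows rlz_mono_dmor: "is_dmor A C f a a' \<Longrightarrow> rlz I a \<subseteq> rlz I a'"
    and rlz_list_mono_smor: "is_smor A C g xs ys \<Longrightarrow> rlz_list I xs \<subseteq> rlz_list I ys"
proof (induction rule: is_dmor_is_smor.inducts)
  case (base f o1 o2)
  then show ?case using assms by (auto simp: is_interpretation_def)
next
  case (arr al fs as' as f a a')
  then show ?case by (simp add: arrow_mono)
next
  case (seq al ys xs fs)
  have "rlz_list I xs \<subseteq> rlz I (ys ! i)" if "i < length ys" for i
  proof -
    have "al ! i - 1 < length xs"
      using is_fun_nth_index[OF in_class_is_fun[OF seq(1)] that] .
    then have "rlz_list I xs \<subseteq> rlz I (xs ! (al ! i - 1))"
      by (auto simp: rlz_list_conv_INT)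
    then show ?thesis using seq.IH that by blast
  qed
  then show ?case unfolding rlz_list_conv_INT[of I ys] by (metis INT_greatest in_set_conv_nth)
qed

theorem lemma4:
  fixes A :: "('o, 'm) cat" and C :: fclass and I :: "'o \<Rightarrow> lterm set"
  assumes "category A" and "is_interpretation A I"
  shows "(\<forall>f a a'. is_dmor A C f a a' \<longrightarrow> rlz I a \<subseteq> rlz I a') \<and>
         (\<forall>g xs ys. is_smor A C g xs ys \<longrightarrow> rlz_list I xs \<subseteq> rlz_list I ys)"
  using rlz_mono_dmor[OF assms(2)] rlz_list_mono_smor[OF assms(2)] by blast

end
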